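(* Let $t,\Delta\in\mathbb{N}$. If $A_1$ $(t,\Delta)$-approximates $B_1$ and $A_2$ $(t,\Delta)$-approximates $B_2$, then $A_1\oplus_t A_2$ $(t,\Delta)$-approximates $B_1\oplus_t B_2$.
   Context: $\mathbb{N}=\{0,1,2,\dots\}$, $[t]=\{0,1,\dots,t\}$. For $A,B\subseteq\mathbb{N}$, $A+B=\{a+b: a\in A, b\in B\}$ and $A\oplus_t B=(A+B)\cap[t]$. For $A\subseteq[t]$ and $b\in\mathbb{N}$ define $\mathrm{apx}^-_t(b,A)=\max\{a\in A\cup\{t+1\}: a\le b\}$ and $\mathrm{apx}^+_t(b,A)=\min\{a\in A\cup\{t+1\}: a\ge b\}$, with $\max\emptyset=-\infty$, $\min\emptyset=\infty$. $A$ $(t,\Delta)$-approximates $B$ if $A\subseteq B\subseteq[t]$ and for every $b\in B$, $\mathrm{apx}^+_t(b,A)-\mathrm{apx}^-_t(b,A)\le\Delta$. *)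

theory Defs
  imports "HOL-Library.Extended_Real"
begin

definition sumset :: "nat set \<Rightarrow> nat set \<Rightarrow> nat set" where
  "sumset A B = {a + b | a b. a \<in> A \<and> b \<in> B}"

definition capped_sumset :: "nat \<Rightarrow> nat set \<Rightarrow> nat set \<Rightarrow> nat set" where
  "capped_sumset t A B = sumset A B \<inter> {0..t}"

definition apx_minus :: "nat \<Rightarrow> nat \<Rightarrow> nat set \<Rightarrow> ereal" where
  "apx_minus t b A = Sup ((\<lambda>a. ereal (real a)) ` {a \<in> A \<union> {t+1}. a \<le> b})"

definition apx_plus :: "nat \<Rightarrow> nat \<Rightarrow> nat set \<Rightarrow> ereal" where
  "apx_plus t b A = Inf ((\<lambda>a. ereal (real a)) ` {a \<in> A \<union> {t+1}. b \<le> a})"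

definition approximates :: "nat \<Rightarrow> nat \<Rightarrow> nat set \<Rightarrow> nat set \<Rightarrow> bool" where
  "approximates t \<Delta> A B \<longleftrightarrow> A \<subseteq> B \<and> B \<subseteq> {0..t} \<and>
     (\<forall>b\<in>B. apx_plus t b A - apx_minus t b A \<le> ereal (real \<Delta>))"

end

theory Submission
  imports Defs
begin

text \<open>Approximation says exactly that every b in B lies between two points of A \<union> {t+1}
  at distance at most \<Delta>. Padding A with everything above t instead of just t+1 makes this
  bracketing condition closed under sumsets: if l1 \<le> b1 \<le> u1 and l2 \<le> b2 \<le> u2, then b1 + b2
  lies in [l1 + l2, l1 + u2] or in [l1 + u2, u1 + u2], intervals of lengths u2 - l2 and
  u1 - l1. Sums involving a padding point exceed t, so they are padding points of the capped
  sumset again.\<close>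

definition bracketed :: "nat set \<Rightarrow> nat \<Rightarrow> nat \<Rightarrow> bool" where
  "bracketed X \<Delta> b \<longleftrightarrow> (\<exists>l\<in>X. \<exists>u\<in>X. l \<le> b \<and> b \<le> u \<and> u - l \<le> \<Delta>)"

lemma bracketedI:
  "l \<in> X \<Longrightarrow> u \<in> X \<Longrightarrow> l \<le> b \<Longrightarrow> b \<le> u \<Longrightarrow> u - l \<le> \<Delta> \<Longrightarrow> bracketed X \<Delta> b"
  unfolding bracketed_def by blast

lemma bracketed_mono: "bracketed X \<Delta> b \<Longrightarrow> X \<subseteq> Y \<Longrightarrow> bracketed Y \<Delta> b"
  unfolding bracketed_def by blast

lemma bracketed_sumset:
  assumes "bracketed X \<Delta> b\<^sub>1" and "bracketed Y \<Delta> b\<^sub>2"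
  shows "bracketed (sumset X Y) \<Delta> (b\<^sub>1 + b\<^sub>2)"
proof -
  obtain l\<^sub>1 u\<^sub>1 where X: "l\<^sub>1 \<in> X" "u\<^sub>1 \<in> X" "l\<^sub>1 \<le> b\<^sub>1" "b\<^sub>1 \<le> u\<^sub>1" "u\<^sub>1 - l\<^sub>1 \<le> \<Delta>"
    using assms(1) unfolding bracketed_def by blast
  obtain l\<^sub>2 u\<^sub>2 where Y: "l\<^sub>2 \<in> Y" "u\<^sub>2 \<in> Y" "l\<^sub>2 \<le> b\<^sub>2" "b\<^sub>2 \<le> u\<^sub>2" "u\<^sub>2 - l\<^sub>2 \<le> \<Delta>"
    using assms(2) unfolding bracketed_def by blast
  have sums: "l\<^sub>1 + l\<^sub>2 \<in> sumset X Y" "l\<^sub>1 + u\<^sub>2 \<in> sumset X Y" "u\<^sub>1 + u\<^sub>2 \<in> sumset X Y"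
    using X Y unfolding sumset_def by blast+
  show ?thesis
  proof (cases "b\<^sub>1 + b\<^sub>2 \<le> l\<^sub>1 + u\<^sub>2")
    case True
    then show ?thesis
      using sums(1,2) X Y by (intro bracketedI[of "l\<^sub>1 + l\<^sub>2" _ "l\<^sub>1 + u\<^sub>2"]) auto
  next
    case False
    then show ?thesis
      using sums(2,3) X Y by (intro bracketedI[of "l\<^sub>1 + u\<^sub>2" _ "u\<^sub>1 + u\<^sub>2"]) auto
  qed
qed

lemma bracketed_round_down_padding:
  assumes "bracketed (A \<union> {t<..}) \<Delta> b" and "b \<le> t"
  shows "bracketed (A \<union> {t+1}) \<Delta> b"
proof -
  obtain l u where l: "l \<in> A" "l \<le> b" and u: "u \<in> A \<union> {t<..}" "b \<le> u" "u - l \<le> \<Delta>"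
    using assms unfolding bracketed_def by fastforce
  show ?thesis
  proof (cases "u \<in> A")
    case True
    then show ?thesis using l u unfolding bracketed_def by blast
  next
    case False
    then have "t + 1 \<le> u" using u(1) by auto
    then show ?thesis
      using l u assms(2) by (intro bracketedI[of l _ "t + 1"]) auto
  qed
qed

lemma sumset_padded_subset_capped_sumset_padded:
  "sumset (A\<^sub>1 \<union> {t<..}) (A\<^sub>2 \<union> {t<..}) \<subseteq> capped_sumset t A\<^sub>1 A\<^sub>2 \<union> {t<..}"
  unfolding sumset_def capped_sumset_def by fastforce

lemma capped_sumset_mono:
  "A\<^sub>1 \<subseteq> B\<^sub>1 \<Longrightarrow> A\<^sub>2 \<subseteq> B\<^sub>2 \<Longrightarrow> capped_sumset t A\<^sub>1 A\<^sub>2 \<subseteq> capped_sumset t B\<^sub>1 B\<^sub>2"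
  unfolding capped_sumset_def sumset_def by blast

lemma Sup_ereal_of_nat_image:
  assumes "finite S" and "S \<noteq> {}"
  shows "Sup ((\<lambda>a. ereal (real a)) ` S) = ereal (real (Max S))"
proof (rule antisym)
  show "Sup ((\<lambda>a. ereal (real a)) ` S) \<le> ereal (real (Max S))"
    using assms by (intro Sup_least) auto
  show "ereal (real (Max S)) \<le> Sup ((\<lambda>a. ereal (real a)) ` S)"
    using assms by (intro Sup_upper) auto
qed

lemma Inf_ereal_of_nat_image:
  assumes "S \<noteq> {}"
  shows "Inf ((\<lambda>a. ereal (real a)) ` S) = ereal (real (Inf S))"
proof (rule antisym)
  show "Inf ((\<lambda>a. ereal (real a)) ` S) \<le> ereal (real (Inf S))"
    using assms Inf_nat_def1 by (intro Inf_lower) auto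
  show "ereal (real (Inf S)) \<le> Inf ((\<lambda>a. ereal (real a)) ` S)"
    by (intro Inf_greatest) (auto intro: cInf_lower)
qed

text \<open>No hypothesis is needed: whenever a bracketing pair is missing, apx_minus is -\<infinity> or
  apx_plus is \<infinity>, and then the extended-real difference is \<infinity>.\<close>
lemma apx_gap_le_iff_bracketed:
  "apx_plus t b A - apx_minus t b A \<le> ereal (real \<Delta>) \<longleftrightarrow> bracketed (A \<union> {t+1}) \<Delta> b"
proof
  define below where "below = {a \<in> A \<union> {t+1}. a \<le> b}"
  define above where "above = {a \<in> A \<union> {t+1}. b \<le> a}"
  assume gap: "apx_plus t b A - apx_minus t b A \<le> ereal (real \<Delta>)"
  have "below \<noteq> {}"
  proof
    assume "below = {}"
    then have "apx_minus t b A = -\<infinity>"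
      unfolding apx_minus_def below_def[symmetric] by (simp add: bot_ereal_def)
    then show False using gap by simp
  qed
  have "finite below" unfolding below_def by (rule finite_subset[of _ "{..b}"]) auto
  then have minus: "apx_minus t b A = ereal (real (Max below))"
    unfolding apx_minus_def below_def[symmetric] using Sup_ereal_of_nat_image \<open>below \<noteq> {}\<close> by blast
  have "above \<noteq> {}"
  proof
    assume "above = {}"
    then have "apx_plus t b A = \<infinity>"
      unfolding apx_plus_def above_def[symmetric] by (simp add: top_ereal_def)
    then show False using gap minus by simp
  qed
  then have plus: "apx_plus t b A = ereal (real (Inf above))"
    unfolding apx_plus_def above_def[symmetric] by (rule Inf_ereal_of_nat_image)
  have "Max below \<in> below" "Inf above \<in> above"
    using \<open>finite below\<close> \<open>below \<noteq> {}\<close> \<open>above \<noteq> {}\<close> Inf_nat_def1 by auto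
  moreover have "Inf above - Max below \<le> \<Delta>"
    using gap unfolding plus minus by simp
  ultimately show "bracketed (A \<union> {t+1}) \<Delta> b"
    unfolding bracketed_def below_def above_def by blast
next
  assume "bracketed (A \<union> {t+1}) \<Delta> b"
  then obtain l u where "l \<in> A \<union> {t+1}" "u \<in> A \<union> {t+1}" "l \<le> b" "b \<le> u" "u - l \<le> \<Delta>"
    unfolding bracketed_def by blast
  then have "apx_plus t b A \<le> ereal (real u)" and "ereal (real l) \<le> apx_minus t b A"
    unfolding apx_minus_def apx_plus_def by (auto intro: Sup_upper Inf_lower)
  then have "apx_plus t b A - apx_minus t b A \<le> ereal (real u) - ereal (real l)"
    by (rule ereal_minus_mono)
  also have "\<dots> \<le> ereal (real \<Delta>)"
    using \<open>u - l \<le> \<Delta>\<close> \<open>l \<le> b\<close> \<open>b \<le> u\<close> by simp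
  finally show "apx_plus t b A - apx_minus t b A \<le> ereal (real \<Delta>)" .
qed

lemma approximates_iff_bracketed:
  "approximates t \<Delta> A B \<longleftrightarrow>
     A \<subseteq> B \<and> B \<subseteq> {0..t} \<and> (\<forall>b\<in>B. bracketed (A \<union> {t<..}) \<Delta> b)"
proof -
  have "bracketed (A \<union> {t+1}) \<Delta> b \<longleftrightarrow> bracketed (A \<union> {t<..}) \<Delta> b" if "b \<le> t" for b
    using bracketed_mono[of "A \<union> {t+1}" \<Delta> b "A \<union> {t<..}"] bracketed_round_down_padding that
    by auto
  then show ?thesis
    unfolding approximates_def apx_gap_le_iff_bracketed by (meson atLeastAtMost_iff subsetD)
qed

theorem lemma4p5:
  fixes t \<Delta> :: nat and A1 A2 B1 B2 :: "nat set"
  assumes "approximates t \<Delta> A1 B1"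
      and "approximates t \<Delta> A2 B2"
  shows "approximates t \<Delta> (capped_sumset t A1 A2) (capped_sumset t B1 B2)"
proof -
  have "bracketed (capped_sumset t A1 A2 \<union> {t<..}) \<Delta> b" if b: "b \<in> capped_sumset t B1 B2" for b
  proof -
    obtain b\<^sub>1 b\<^sub>2 where "b = b\<^sub>1 + b\<^sub>2" "b\<^sub>1 \<in> B1" "b\<^sub>2 \<in> B2"
      using b unfolding capped_sumset_def sumset_def by auto
    then have "bracketed (sumset (A1 \<union> {t<..}) (A2 \<union> {t<..})) \<Delta> b"
      using assms bracketed_sumset unfolding approximates_iff_bracketed by blast
    then show ?thesis
      using bracketed_mono sumset_padded_subset_capped_sumset_padded by blast
  qed
  moreover have "capped_sumset t A1 A2 \<subseteq> capped_sumset t B1 B2"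
    using assms capped_sumset_mono unfolding approximates_def by blast
  ultimately show ?thesis
    unfolding approximates_iff_bracketed capped_sumset_def by blast
qed

end
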